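(* Let $g\colon X_m\to X_m$ be an odometer with metric $d(x,y)=\sup_{k\ge1}2^{-k}\delta(x_k,y_k)$, where $\delta(a,b)=0$ if $a=b$ and $1$ otherwise. Let $X=\{p\}\sqcup X_m$ with $d$ extended to a metric on $X$ such that $d(p,x)>1$ for all $x\in X_m$. Let $q=(0,0,\dots)\in X_m$ and define $f\colon X\to X$ by $f(p)=q$ and $f(x)=g(x)$ for $x\in X_m$. Then $f$ is equicontinuous and has the shadowing property, but $f$ does not have the s-limit shadowing property.
   Context: Odometer: given a strictly increasing sequence $m=(m_k)_{k\ge1}$ of positive integers with $m_1\ge2$ and $m_k\mid m_{k+1}$, $X_m=\{(x_k)_{k\ge1}\in\prod_{k}\{0,\dots,m_k-1\}: x_k\equiv x_{k+1}\pmod{m_k}\ \forall k\}$ and $g(x)_k=x_k+1\pmod{m_k}$. $f$ is equicontinuous if for every $\epsilon>0$ there is $\delta>0$ with $d(x,y)\le\delta\Rightarrow\sup_{n\ge0}d(f^n(x),f^n(y))\le\epsilon$. A $\delta$-pseudo orbit is $(x_i)_{i\ge0}$ with $d(f(x_i),x_{i+1})\le\delta$ for all $i$; it is $\epsilon$-shadowed by $x$ if $d(x_i,f^i(x))\le\epsilon$ for all $i$; a limit pseudo orbit satisfies $\lim_i d(f(x_i),x_{i+1})=0$, and $y$ is a limit shadowing point of it if $\lim_i d(x_i,f^i(y))=0$. Shadowing property: for every $\epsilon>0$ there is $\delta>0$ such that every $\delta$-pseudo orbit is $\epsilon$-shadowed by some point. s-limit shadowing property: for every $\epsilon>0$ there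 is $\delta>0$ such that (1) every $\delta$-pseudo orbit is $\epsilon$-shadowed by some point, and (2) every $\delta$-pseudo orbit that is also a limit pseudo orbit is $\epsilon$-shadowed by some point that is also a limit shadowing point of it. *)

theory Defs
  imports Complex_Main
begin

text \<open>Sequences are indexed by k \<ge> 1; index 0 is unused and normalised to 0.\<close>

definition odometer_seq :: "(nat \<Rightarrow> nat) \<Rightarrow> bool" where
  "odometer_seq m \<longleftrightarrow> m 1 \<ge> 2 \<and> (\<forall>k\<ge>1. m k < m (Suc k) \<and> m k dvd m (Suc k))"

definition odometer_space :: "(nat \<Rightarrow> nat) \<Rightarrow> (nat \<Rightarrow> nat) set" where
  "odometer_space m = {x. x 0 = 0 \<and> (\<forall>k\<ge>1. x k < m k \<and> x k mod m k = x (Suc k) mod m k)}"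

definition odometer_map :: "(nat \<Rightarrow> nat) \<Rightarrow> (nat \<Rightarrow> nat) \<Rightarrow> (nat \<Rightarrow> nat)" where
  "odometer_map m x = (\<lambda>k. if k = 0 then 0 else (x k + 1) mod m k)"

definition odometer_dist :: "(nat \<Rightarrow> nat) \<Rightarrow> (nat \<Rightarrow> nat) \<Rightarrow> real" where
  "odometer_dist x y = (SUP k\<in>{1..}. (if x k = y k then 0 else (1/2::real) ^ k))"

definition metric_on :: "'a set \<Rightarrow> ('a \<Rightarrow> 'a \<Rightarrow> real) \<Rightarrow> bool" where
  "metric_on S d \<longleftrightarrow>
     (\<forall>x\<in>S. \<forall>y\<in>S. 0 \<le> d x y \<and> (d x y = 0 \<longleftrightarrow> x = y) \<and> d x y = d y x) \<and>
     (\<forall>x\<in>S. \<forall>y\<in>S. \<forall>z\<in>S. d x z \<le> d x y + d y z)"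

definition equicontinuous_on :: "'a set \<Rightarrow> ('a \<Rightarrow> 'a \<Rightarrow> real) \<Rightarrow> ('a \<Rightarrow> 'a) \<Rightarrow> bool" where
  "equicontinuous_on S d f \<longleftrightarrow>
     (\<forall>\<epsilon>>0. \<exists>\<delta>>0. \<forall>x\<in>S. \<forall>y\<in>S. d x y \<le> \<delta> \<longrightarrow> (\<forall>n. d ((f ^^ n) x) ((f ^^ n) y) \<le> \<epsilon>))"

definition pseudo_orbit :: "'a set \<Rightarrow> ('a \<Rightarrow> 'a \<Rightarrow> real) \<Rightarrow> ('a \<Rightarrow> 'a) \<Rightarrow> real \<Rightarrow> (nat \<Rightarrow> 'a) \<Rightarrow> bool" where
  "pseudo_orbit S d f \<delta> xs \<longleftrightarrow> (\<forall>i. xs i \<in> S) \<and> (\<forall>i. d (f (xs i)) (xs (Suc i)) \<le> \<delta>)"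

definition limit_pseudo_orbit :: "'a set \<Rightarrow> ('a \<Rightarrow> 'a \<Rightarrow> real) \<Rightarrow> ('a \<Rightarrow> 'a) \<Rightarrow> (nat \<Rightarrow> 'a) \<Rightarrow> bool" where
  "limit_pseudo_orbit S d f xs \<longleftrightarrow> (\<forall>i. xs i \<in> S) \<and> (\<lambda>i. d (f (xs i)) (xs (Suc i))) \<longlonglongrightarrow> 0"

definition shadows :: "('a \<Rightarrow> 'a \<Rightarrow> real) \<Rightarrow> ('a \<Rightarrow> 'a) \<Rightarrow> real \<Rightarrow> (nat \<Rightarrow> 'a) \<Rightarrow> 'a \<Rightarrow> bool" where
  "shadows d f \<epsilon> xs x \<longleftrightarrow> (\<forall>i. d (xs i) ((f ^^ i) x) \<le> \<epsilon>)"

definition limit_shadows :: "('a \<Rightarrow> 'a \<Rightarrow> real) \<Rightarrow> ('a \<Rightarrow> 'a) \<Rightarrow> (nat \<Rightarrow> 'a) \<Rightarrow> 'a \<Rightarrow> bool" where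
  "limit_shadows d f xs y \<longleftrightarrow> (\<lambda>i. d (xs i) ((f ^^ i) y)) \<longlonglongrightarrow> 0"

definition shadowing_property :: "'a set \<Rightarrow> ('a \<Rightarrow> 'a \<Rightarrow> real) \<Rightarrow> ('a \<Rightarrow> 'a) \<Rightarrow> bool" where
  "shadowing_property S d f \<longleftrightarrow>
     (\<forall>\<epsilon>>0. \<exists>\<delta>>0. \<forall>xs. pseudo_orbit S d f \<delta> xs \<longrightarrow> (\<exists>x\<in>S. shadows d f \<epsilon> xs x))"

definition s_limit_shadowing_property :: "'a set \<Rightarrow> ('a \<Rightarrow> 'a \<Rightarrow> real) \<Rightarrow> ('a \<Rightarrow> 'a) \<Rightarrow> bool" where
  "s_limit_shadowing_property S d f \<longleftrightarrow>
     (\<forall>\<epsilon>>0. \<exists>\<delta>>0.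
        (\<forall>xs. pseudo_orbit S d f \<delta> xs \<longrightarrow> (\<exists>x\<in>S. shadows d f \<epsilon> xs x)) \<and>
        (\<forall>xs. pseudo_orbit S d f \<delta> xs \<and> limit_pseudo_orbit S d f xs \<longrightarrow>
              (\<exists>x\<in>S. shadows d f \<epsilon> xs x \<and> limit_shadows d f xs x)))"

section \<open>The example: X = {p} \<squnion> X_m, p = None\<close>

definition ext_space :: "(nat \<Rightarrow> nat) \<Rightarrow> (nat \<Rightarrow> nat) option set" where
  "ext_space m = insert None (Some ` odometer_space m)"

definition ext_map :: "(nat \<Rightarrow> nat) \<Rightarrow> (nat \<Rightarrow> nat) option \<Rightarrow> (nat \<Rightarrow> nat) option" where
  "ext_map m z = (case z of None \<Rightarrow> Some (\<lambda>_. 0) | Some x \<Rightarrow> Some (odometer_map m x))"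

end

theory Submission
  imports Defs
begin

text \<open>Two points of the odometer are within distance \<open>2\<^sup>-\<^sup>K\<close> exactly when their coordinates
  below \<open>K\<close> agree, and the odometer acts on each coordinate separately, so this agreement is
  preserved by the dynamics. Hence a \<open>2\<^sup>-\<^sup>K\<close>-pseudo orbit agrees below \<open>K\<close> with the true orbit of
  its initial point at all times, which gives equicontinuity and shadowing; the added point \<open>p\<close> is
  isolated and does not disturb this. On the other hand the pseudo orbit
  \<open>p, g\<^sup>N(q), g\<^sup>N\<^sup>+\<^sup>1(q), \<dots>\<close> with \<open>N = m\<^sub>K\<close> makes a single small jump and is then exact, so it is a
  limit pseudo orbit. Only \<open>p\<close> can shadow it at time \<open>0\<close>, but the orbit \<open>q, g(q), \<dots>\<close> of \<open>p\<close> differs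
  from it in coordinate \<open>K + 1\<close> forever, because \<open>0 < N < m\<^sub>K\<^sub>+\<^sub>1\<close>.\<close>

definition agree_below :: "nat \<Rightarrow> (nat \<Rightarrow> nat) \<Rightarrow> (nat \<Rightarrow> nat) \<Rightarrow> bool" where
  "agree_below K x y \<longleftrightarrow> (\<forall>k\<in>{1..<K}. x k = y k)"

lemma odometer_seq_ge_two:
  assumes "odometer_seq m" "1 \<le> k"
  shows "2 \<le> m k"
  using assms(2)
proof (induction k rule: dec_induct)
  case base
  then show ?case using assms(1) by (simp add: odometer_seq_def)
next
  case (step n)
  then show ?case using assms(1) unfolding odometer_seq_def by (metis le_trans less_imp_le)
qed

lemma odometer_seq_dvd:
  assumes "odometer_seq m" "1 \<le> k" "k \<le> K"
  shows "m k dvd m K"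
  using assms(3)
proof (induction K rule: dec_induct)
  case (step n)
  then show ?case using assms(1,2) unfolding odometer_seq_def by (meson dvd_trans order_trans)
qed simp

lemma zero_in_odometer_space:
  assumes "odometer_seq m"
  shows "(\<lambda>_. 0) \<in> odometer_space m"
  using odometer_seq_ge_two[OF assms] by (fastforce simp: odometer_space_def)

lemma odometer_map_in_space:
  assumes "odometer_seq m" "x \<in> odometer_space m"
  shows "odometer_map m x \<in> odometer_space m"
  unfolding odometer_space_def
proof (intro CollectI conjI allI impI)
  fix k :: nat
  assume k: "1 \<le> k"
  have "m k dvd m (Suc k)" using assms(1) k by (simp add: odometer_seq_def)
  then have "(x (Suc k) + 1) mod m (Suc k) mod m k = (x (Suc k) mod m k + 1) mod m k"
    by (simp add: mod_mod_cancel mod_Suc_eq)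
  also have "x (Suc k) mod m k = x k mod m k"
    using assms(2) k unfolding odometer_space_def by (blast intro: sym)
  also have "(x k mod m k + 1) mod m k = (x k + 1) mod m k"
    by (rule mod_add_left_eq)
  finally show "odometer_map m x k mod m k = odometer_map m x (Suc k) mod m k"
    using k by (simp add: odometer_map_def)
  show "odometer_map m x k < m k"
    using odometer_seq_ge_two[OF assms(1) k] k by (simp add: odometer_map_def)
qed (simp add: odometer_map_def)

lemma funpow_odometer_map_in_space:
  assumes "odometer_seq m" "x \<in> odometer_space m"
  shows "(odometer_map m ^^ n) x \<in> odometer_space m"
  by (induction n) (simp_all add: assms odometer_map_in_space)

lemma funpow_odometer_map_zero_apply:
  assumes "1 \<le> k"
  shows "(odometer_map m ^^ n) (\<lambda>_. 0) k = n mod m k"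
  by (induction n) (use assms in \<open>simp_all add: odometer_map_def mod_Suc_eq\<close>)

lemma agree_below_refl [simp]: "agree_below K x x"
  by (simp add: agree_below_def)

lemma agree_below_odometer_map:
  "agree_below K x y \<Longrightarrow> agree_below K (odometer_map m x) (odometer_map m y)"
  by (simp add: agree_below_def odometer_map_def)

lemma odometer_dist_le_pow_iff:
  "odometer_dist x y \<le> (1/2) ^ K \<longleftrightarrow> agree_below K x y"
proof
  assume close: "odometer_dist x y \<le> (1/2) ^ K"
  show "agree_below K x y" unfolding agree_below_def
  proof
    fix k assume k: "k \<in> {1..<K}"
    have bdd: "bdd_above ((\<lambda>k. if x k = y k then 0 else (1/2::real) ^ k) ` {1..})"
      by (rule bdd_aboveI2[where M = 1]) (simp add: power_le_one)
    have "(if x k = y k then 0 else (1/2::real) ^ k) \<le> odometer_dist x y"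
      unfolding odometer_dist_def using k by (intro cSUP_upper[OF _ bdd]) auto
    moreover have "(1/2::real) ^ K < (1/2) ^ k" using k by (intro power_strict_decreasing) auto
    ultimately show "x k = y k" using close by (cases "x k = y k") auto
  qed
next
  assume "agree_below K x y"
  then show "odometer_dist x y \<le> (1/2) ^ K"
    unfolding odometer_dist_def agree_below_def
    by (intro cSUP_least) (auto intro!: power_decreasing)
qed

lemma rel_option_agree_below_ext_map:
  "rel_option (agree_below K) x y \<Longrightarrow> rel_option (agree_below K) (ext_map m x) (ext_map m y)"
  by (cases x; cases y) (simp_all add: ext_map_def agree_below_odometer_map)

lemma rel_option_agree_below_funpow_ext_map:
  "rel_option (agree_below K) x y
    \<Longrightarrow> rel_option (agree_below K) ((ext_map m ^^ n) x) ((ext_map m ^^ n) y)"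
  by (induction n) (simp_all add: rel_option_agree_below_ext_map)

lemma rel_option_agree_below_trans:
  "rel_option (agree_below K) x y \<Longrightarrow> rel_option (agree_below K) y z
    \<Longrightarrow> rel_option (agree_below K) x z"
  by (cases x; cases y; cases z) (auto simp: agree_below_def)

lemma rel_option_agree_below_sym:
  "rel_option (agree_below K) x y \<Longrightarrow> rel_option (agree_below K) y x"
  by (cases x; cases y) (auto simp: agree_below_def)

lemma pseudo_orbit_mono:
  "pseudo_orbit S d f \<delta> xs \<Longrightarrow> \<delta> \<le> \<delta>' \<Longrightarrow> pseudo_orbit S d f \<delta>' xs"
  by (auto simp: pseudo_orbit_def intro: order_trans)

lemma funpow_ext_map_None:
  "(ext_map m ^^ Suc n) None = Some ((odometer_map m ^^ n) (\<lambda>_. 0))"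
proof -
  have "(ext_map m ^^ n) (Some x) = Some ((odometer_map m ^^ n) x)" for x
    by (induction n) (simp_all add: ext_map_def)
  then show ?thesis by (simp only: funpow_Suc_right o_def) (simp add: ext_map_def)
qed

definition jump_orbit :: "(nat \<Rightarrow> nat) \<Rightarrow> nat \<Rightarrow> nat \<Rightarrow> (nat \<Rightarrow> nat) option" where
  "jump_orbit m K i =
     (case i of 0 \<Rightarrow> None | Suc j \<Rightarrow> Some ((odometer_map m ^^ (m K + j)) (\<lambda>_. 0)))"

lemma ext_map_jump_orbit_Suc:
  "ext_map m (jump_orbit m K (Suc j)) = jump_orbit m K (Suc (Suc j))"
  by (simp add: jump_orbit_def ext_map_def)

locale odometer_extension =
  fixes m :: "nat \<Rightarrow> nat"
    and D :: "(nat \<Rightarrow> nat) option \<Rightarrow> (nat \<Rightarrow> nat) option \<Rightarrow> real"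
  assumes odometer: "odometer_seq m"
    and metric: "metric_on (ext_space m) D"
    and D_Some: "\<lbrakk>x \<in> odometer_space m; y \<in> odometer_space m\<rbrakk>
                   \<Longrightarrow> D (Some x) (Some y) = odometer_dist x y"
    and D_None_Some: "x \<in> odometer_space m \<Longrightarrow> 1 < D None (Some x)"
begin

lemma ext_map_in_space: "z \<in> ext_space m \<Longrightarrow> ext_map m z \<in> ext_space m"
  using odometer zero_in_odometer_space odometer_map_in_space
  by (cases z) (auto simp: ext_space_def ext_map_def)

lemma funpow_ext_map_in_space: "z \<in> ext_space m \<Longrightarrow> (ext_map m ^^ n) z \<in> ext_space m"
  by (induction n) (simp_all add: ext_map_in_space)

lemma D_self: "z \<in> ext_space m \<Longrightarrow> D z z = 0"
  using metric unfolding metric_on_def by blast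

lemma D_Some_None: "x \<in> odometer_space m \<Longrightarrow> 1 < D (Some x) None"
  using metric D_None_Some unfolding metric_on_def ext_space_def
  by (metis image_eqI insertI1 insertI2)

lemma D_le_pow_iff:
  assumes "x \<in> ext_space m" "y \<in> ext_space m"
  shows "D x y \<le> (1/2) ^ K \<longleftrightarrow> rel_option (agree_below K) x y"
proof (cases "(x = None) = (y = None)")
  case True
  then show ?thesis
    using assms D_self[of None]
    by (cases x; cases y) (auto simp: ext_space_def D_Some odometer_dist_le_pow_iff)
next
  case False
  then have "1 < D x y"
    using assms D_None_Some D_Some_None by (cases x; cases y) (auto simp: ext_space_def)
  moreover have "(1/2::real) ^ K \<le> 1" by (simp add: power_le_one)
  moreover have "\<not> rel_option (agree_below K) x y" using False by (cases x; cases y) auto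
  ultimately show ?thesis by auto
qed

lemma equicontinuous: "equicontinuous_on (ext_space m) D (ext_map m)"
  unfolding equicontinuous_on_def
proof (intro allI impI)
  fix \<epsilon> :: real assume "0 < \<epsilon>"
  then obtain K where K: "(1/2::real) ^ K < \<epsilon>" using real_arch_pow_inv[of \<epsilon> "1/2"] by auto
  have "D ((ext_map m ^^ n) x) ((ext_map m ^^ n) y) \<le> \<epsilon>"
    if x: "x \<in> ext_space m" and y: "y \<in> ext_space m" and "D x y \<le> (1/2) ^ K" for x y n
  proof -
    have "rel_option (agree_below K) ((ext_map m ^^ n) x) ((ext_map m ^^ n) y)"
      using that by (simp add: D_le_pow_iff rel_option_agree_below_funpow_ext_map)
    then have "D ((ext_map m ^^ n) x) ((ext_map m ^^ n) y) \<le> (1/2) ^ K"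
      by (simp add: D_le_pow_iff funpow_ext_map_in_space x y)
    then show ?thesis using K by linarith
  qed
  then show "\<exists>\<delta>>0. \<forall>x\<in>ext_space m. \<forall>y\<in>ext_space m. D x y \<le> \<delta>
               \<longrightarrow> (\<forall>n. D ((ext_map m ^^ n) x) ((ext_map m ^^ n) y) \<le> \<epsilon>)"
    by (intro exI[of _ "(1/2) ^ K"]) simp
qed

lemma pseudo_orbit_agrees_with_orbit:
  assumes "pseudo_orbit (ext_space m) D (ext_map m) ((1/2) ^ K) xs"
  shows "rel_option (agree_below K) (xs i) ((ext_map m ^^ i) (xs 0))"
proof (induction i)
  case 0
  show ?case by (cases "xs 0") simp_all
next
  case (Suc i)
  have xs: "xs j \<in> ext_space m" for j using assms by (simp add: pseudo_orbit_def)
  have "ext_map m (xs i) \<in> ext_space m" using ext_map_in_space xs by simp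
  moreover have "D (ext_map m (xs i)) (xs (Suc i)) \<le> (1/2) ^ K"
    using assms by (simp add: pseudo_orbit_def)
  ultimately have "rel_option (agree_below K) (ext_map m (xs i)) (xs (Suc i))"
    using D_le_pow_iff xs by blast
  moreover have "rel_option (agree_below K) (ext_map m (xs i)) ((ext_map m ^^ Suc i) (xs 0))"
    using rel_option_agree_below_ext_map[OF Suc] by simp
  ultimately show ?case using rel_option_agree_below_sym rel_option_agree_below_trans by blast
qed

lemma shadowing: "shadowing_property (ext_space m) D (ext_map m)"
  unfolding shadowing_property_def
proof (intro allI impI)
  fix \<epsilon> :: real assume "0 < \<epsilon>"
  then obtain K where K: "(1/2::real) ^ K < \<epsilon>" using real_arch_pow_inv[of \<epsilon> "1/2"] by auto
  have "shadows D (ext_map m) \<epsilon> xs (xs 0)"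
    if po: "pseudo_orbit (ext_space m) D (ext_map m) ((1/2) ^ K) xs" for xs
    unfolding shadows_def
  proof
    fix i
    have "xs i \<in> ext_space m" "(ext_map m ^^ i) (xs 0) \<in> ext_space m"
      using po funpow_ext_map_in_space by (simp_all add: pseudo_orbit_def)
    then have "D (xs i) ((ext_map m ^^ i) (xs 0)) \<le> (1/2) ^ K"
      using D_le_pow_iff pseudo_orbit_agrees_with_orbit[OF po] by blast
    then show "D (xs i) ((ext_map m ^^ i) (xs 0)) \<le> \<epsilon>" using K by linarith
  qed
  then show "\<exists>\<delta>>0. \<forall>xs. pseudo_orbit (ext_space m) D (ext_map m) \<delta> xs
               \<longrightarrow> (\<exists>x\<in>ext_space m. shadows D (ext_map m) \<epsilon> xs x)"
    by (intro exI[of _ "(1/2) ^ K"]) (auto simp: pseudo_orbit_def)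
qed

lemma jump_orbit_in_space: "jump_orbit m K i \<in> ext_space m"
  by (cases i)
    (simp_all add: jump_orbit_def ext_space_def funpow_odometer_map_in_space odometer
      zero_in_odometer_space)

lemma jump_orbit_pseudo_orbit:
  "pseudo_orbit (ext_space m) D (ext_map m) ((1/2) ^ Suc K) (jump_orbit m K)"
  unfolding pseudo_orbit_def
proof (intro conjI allI)
  fix i
  show "jump_orbit m K i \<in> ext_space m" by (rule jump_orbit_in_space)
  show "D (ext_map m (jump_orbit m K i)) (jump_orbit m K (Suc i)) \<le> (1/2) ^ Suc K"
  proof (cases i)
    case 0
    have "agree_below (Suc K) (\<lambda>_. 0) ((odometer_map m ^^ m K) (\<lambda>_. 0))"
      using odometer_seq_dvd[OF odometer]
      by (auto simp: agree_below_def funpow_odometer_map_zero_apply)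
    then have "rel_option (agree_below (Suc K))
        (ext_map m (jump_orbit m K i)) (jump_orbit m K (Suc i))"
      using 0 by (simp add: jump_orbit_def ext_map_def)
    moreover have "ext_map m (jump_orbit m K i) \<in> ext_space m"
      by (rule ext_map_in_space[OF jump_orbit_in_space])
    ultimately show ?thesis using D_le_pow_iff jump_orbit_in_space by blast
  next
    case (Suc j)
    then show ?thesis by (simp add: ext_map_jump_orbit_Suc D_self jump_orbit_in_space)
  qed
qed

lemma jump_orbit_limit_pseudo_orbit:
  "limit_pseudo_orbit (ext_space m) D (ext_map m) (jump_orbit m K)"
  unfolding limit_pseudo_orbit_def
  by (simp add: jump_orbit_in_space LIMSEQ_imp_Suc ext_map_jump_orbit_Suc D_self)

lemma jump_orbit_not_limit_shadowed_by_None: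
  assumes "1 \<le> K"
  shows "\<not> limit_shadows D (ext_map m) (jump_orbit m K) None"
proof
  assume "limit_shadows D (ext_map m) (jump_orbit m K) None"
  then have "(\<lambda>j. D (jump_orbit m K (Suc j)) ((ext_map m ^^ Suc j) None)) \<longlonglongrightarrow> 0"
    unfolding limit_shadows_def by (rule LIMSEQ_Suc)
  moreover have "(1/2) ^ Suc (Suc K) < D (jump_orbit m K (Suc j)) ((ext_map m ^^ Suc j) None)"
    for j
  proof -
    have "(m K + j) mod m (Suc K) \<noteq> j mod m (Suc K)"
    proof
      assume "(m K + j) mod m (Suc K) = j mod m (Suc K)"
      then have "m (Suc K) dvd m K" by (simp add: mod_eq_dvd_iff_nat)
      moreover have "2 \<le> m K" "m K < m (Suc K)"
        using odometer assms odometer_seq_ge_two by (auto simp: odometer_seq_def)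
      ultimately show False by (auto dest: dvd_imp_le)
    qed
    then have "\<not> agree_below (Suc (Suc K))
        ((odometer_map m ^^ (m K + j)) (\<lambda>_. 0)) ((odometer_map m ^^ j) (\<lambda>_. 0))"
      by (auto simp: agree_below_def funpow_odometer_map_zero_apply)
    then have "\<not> rel_option (agree_below (Suc (Suc K)))
        (jump_orbit m K (Suc j)) ((ext_map m ^^ Suc j) None)"
      unfolding funpow_ext_map_None by (simp add: jump_orbit_def)
    moreover have "(ext_map m ^^ Suc j) None \<in> ext_space m"
      by (rule funpow_ext_map_in_space) (simp add: ext_space_def)
    ultimately show ?thesis using D_le_pow_iff jump_orbit_in_space not_le by blast
  qed
  ultimately have "(1/2::real) ^ Suc (Suc K) \<le> 0"
    by (intro LIMSEQ_le_const) (auto intro: less_imp_le)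
  then show False using zero_less_power[of "1/2::real" "Suc (Suc K)"] by linarith
qed

lemma not_s_limit_shadowing: "\<not> s_limit_shadowing_property (ext_space m) D (ext_map m)"
proof
  assume s_limit: "s_limit_shadowing_property (ext_space m) D (ext_map m)"
  obtain \<delta> where "0 < \<delta>" and limit_shadowed:
    "\<And>xs. pseudo_orbit (ext_space m) D (ext_map m) \<delta> xs
       \<Longrightarrow> limit_pseudo_orbit (ext_space m) D (ext_map m) xs
       \<Longrightarrow> \<exists>x\<in>ext_space m.
             shadows D (ext_map m) (1/2) xs x \<and> limit_shadows D (ext_map m) xs x"
    using s_limit[unfolded s_limit_shadowing_property_def, rule_format, of "1/2"] by auto
  then obtain K where K: "(1/2::real) ^ K < \<delta>" using real_arch_pow_inv[of \<delta> "1/2"] by auto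
  have "(1/2::real) ^ Suc (Suc K) \<le> (1/2) ^ K" by (rule power_decreasing) auto
  with K have "(1/2::real) ^ Suc (Suc K) \<le> \<delta>" by linarith
  then have "pseudo_orbit (ext_space m) D (ext_map m) \<delta> (jump_orbit m (Suc K))"
    by (rule pseudo_orbit_mono[OF jump_orbit_pseudo_orbit])
  then obtain x where x: "x \<in> ext_space m"
      "shadows D (ext_map m) (1/2) (jump_orbit m (Suc K)) x"
      "limit_shadows D (ext_map m) (jump_orbit m (Suc K)) x"
    using limit_shadowed jump_orbit_limit_pseudo_orbit by blast
  have "D None x \<le> 1/2"
    using x(2)[unfolded shadows_def, rule_format, of 0] by (simp add: jump_orbit_def)
  then have "x = None" using x(1) D_None_Some by (force simp: ext_space_def)
  then show False using x(3) jump_orbit_not_limit_shadowed_by_None[of "Suc K"] by simp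
qed

end

theorem mainTheorem14:
  fixes m :: "nat \<Rightarrow> nat"
    and D :: "(nat \<Rightarrow> nat) option \<Rightarrow> (nat \<Rightarrow> nat) option \<Rightarrow> real"
  assumes "odometer_seq m"
    and "metric_on (ext_space m) D"
    and "\<forall>x\<in>odometer_space m. \<forall>y\<in>odometer_space m. D (Some x) (Some y) = odometer_dist x y"
    and "\<forall>x\<in>odometer_space m. D None (Some x) > 1"
  shows "equicontinuous_on (ext_space m) D (ext_map m)
       \<and> shadowing_property (ext_space m) D (ext_map m)
       \<and> \<not> s_limit_shadowing_property (ext_space m) D (ext_map m)"
proof -
  interpret odometer_extension m D
    using assms by unfold_locales auto
  show ?thesis using equicontinuous shadowing not_s_limit_shadowing by blast
qed

end
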